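(* Let $Q$ be a quiver (no framing, arbitrary orientation) whose underlying graph is the affine Dynkin graph $\widetilde{A}_r$ (a cycle with $r+1$ vertices and $r+1$ edges; for $r=0$ a single loop), let $\beta=(n,\dots,n)$, and put the complete standard filtration at each vertex. Then $\mathbb{C}[\mathfrak{b}^{\oplus r+1}]^{\mathbb{U}_\beta}\cong\mathbb{C}[\mathfrak{t}^{\oplus r+1}]$, i.e. the invariant ring is the subalgebra generated by the diagonal entries of the $r+1$ matrices.
   Context: At each vertex put $\mathbb{C}^n$ with the flag $0\subset\mathbb{C}^1\subset\cdots\subset\mathbb{C}^n$ of standard coordinate subspaces; the filtered representation space is $\mathfrak{b}^{\oplus Q_1}$, tuples $(A_a)$ of upper triangular $n\times n$ matrices, one per arrow. $\mathbb{U}_\beta=U^{Q_0}$, $U$ the upper unitriangular $n\times n$ matrices, acting by $(u_i)\cdot(A_a)=(u_{h(a)}A_au_{t(a)}^{-1})$ with $h,t$ head and tail. $\mathfrak{t}$ denotes diagonal matrices. *)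

theory Defs
  imports Complex_Main "Jordan_Normal_Form.Gauss_Jordan_Elimination"
begin

inductive_set gen_alg :: "('x \<Rightarrow> complex) set \<Rightarrow> ('x \<Rightarrow> complex) set"
  for S :: "('x \<Rightarrow> complex) set" where
  const: "(\<lambda>_. c) \<in> gen_alg S"
| gen: "s \<in> S \<Longrightarrow> s \<in> gen_alg S"
| add: "f \<in> gen_alg S \<Longrightarrow> g \<in> gen_alg S \<Longrightarrow> (\<lambda>x. f x + g x) \<in> gen_alg S"
| mult: "f \<in> gen_alg S \<Longrightarrow> g \<in> gen_alg S \<Longrightarrow> (\<lambda>x. f x * g x) \<in> gen_alg S"

text \<open>Quiver whose underlying graph is the cycle affine A_r: vertices and arrows 0..r,
  arrow k joins k and (k+1) mod (r+1), with arbitrary orientation given by head hh / tail tt.\<close>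
definition cyclic_quiver :: "nat \<Rightarrow> (nat \<Rightarrow> nat) \<Rightarrow> (nat \<Rightarrow> nat) \<Rightarrow> bool" where
  "cyclic_quiver r hh tt \<longleftrightarrow> (\<forall>k\<le>r. {hh k, tt k} = {k, Suc k mod Suc r})"

definition bspace :: "nat \<Rightarrow> nat \<Rightarrow> (nat \<Rightarrow> complex mat) set" where
  "bspace r n = {A. \<forall>a\<le>r. A a \<in> carrier_mat n n \<and> upper_triangular (A a)}"

definition unitri :: "nat \<Rightarrow> complex mat set" where
  "unitri n = {u. u \<in> carrier_mat n n \<and> upper_triangular u \<and> (\<forall>i<n. u $$ (i,i) = 1)}"

definition Ugroup :: "nat \<Rightarrow> nat \<Rightarrow> (nat \<Rightarrow> complex mat) set" where
  "Ugroup r n = {u. \<forall>v\<le>r. u v \<in> unitri n}"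

definition minv :: "complex mat \<Rightarrow> complex mat" where
  "minv u = the (mat_inverse u)"

definition act :: "(nat \<Rightarrow> nat) \<Rightarrow> (nat \<Rightarrow> nat) \<Rightarrow> (nat \<Rightarrow> complex mat) \<Rightarrow> (nat \<Rightarrow> complex mat)
    \<Rightarrow> (nat \<Rightarrow> complex mat)" where
  "act hh tt u A = (\<lambda>a. u (hh a) * A a * minv (u (tt a)))"

definition coord_ring :: "nat \<Rightarrow> nat \<Rightarrow> ((nat \<Rightarrow> complex mat) \<Rightarrow> complex) set" where
  "coord_ring r n = gen_alg {(\<lambda>A. A a $$ (i,j)) | a i j. a \<le> r \<and> i \<le> j \<and> j < n}"

definition diag_alg :: "nat \<Rightarrow> nat \<Rightarrow> ((nat \<Rightarrow> complex mat) \<Rightarrow> complex) set" where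
  "diag_alg r n = gen_alg {(\<lambda>A. A a $$ (i,i)) | a i. a \<le> r \<and> i < n}"

definition invariant_ring :: "nat \<Rightarrow> nat \<Rightarrow> (nat \<Rightarrow> nat) \<Rightarrow> (nat \<Rightarrow> nat)
    \<Rightarrow> ((nat \<Rightarrow> complex mat) \<Rightarrow> complex) set" where
  "invariant_ring r n hh tt = {f \<in> coord_ring r n.
     \<forall>u\<in>Ugroup r n. \<forall>A\<in>bspace r n. f (act hh tt u A) = f A}"

end

theory Submission
  imports Defs "Jordan_Normal_Form.Determinant" "HOL-Computational_Algebra.Polynomial"
begin

text \<open>
  If the diagonal of a representation A is generic, the unipotent group conjugates A to its
  diagonal part: the (i,j) entries (i < j) of the conjugating matrices at the r+1 vertices solve,
  column by column, a linear system p_k y_k + q_k y_(k+1) = c_k around the cycle, where p_k and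
  q_k are the i-th and j-th diagonal entries of A_k up to sign, depending on the orientation of
  arrow k.  Such a system is solvable as soon as the product of the q_k differs from the product
  of the -p_k.  So an invariant f satisfies f(A) = f(diag A) for generic A.  Moving an arbitrary
  A along a line A + tW in diagonal directions, both sides become polynomials in t that agree
  for all but finitely many t, hence also at t = 0.  Conversely, the action does not change
  diagonal entries, so every polynomial in them is invariant.
\<close>

lemma index_mult_mat_sum:
  assumes "A \<in> carrier_mat n n" "B \<in> carrier_mat n n" "i < n" "j < n"
  shows "(A * B) $$ (i,j) = (\<Sum>k<n. A $$ (i,k) * B $$ (k,j))"
  using assms by (auto simp: scalar_prod_def lessThan_atLeast0 intro!: sum.cong)

lemma upper_triangular_mult_index:
  fixes A B :: "'a :: semiring_0 mat"
  assumes A: "A \<in> carrier_mat n n" and B: "B \<in> carrier_mat n n"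
    and uA: "upper_triangular A" and uB: "upper_triangular B" and "i < n" "j < n"
  shows "(A * B) $$ (i,j) = (\<Sum>k\<in>{i..j}. A $$ (i,k) * B $$ (k,j))"
proof -
  have "(A * B) $$ (i,j) = (\<Sum>k<n. A $$ (i,k) * B $$ (k,j))"
    using index_mult_mat_sum[OF A B] assms by simp
  also have "\<dots> = (\<Sum>k\<in>{i..j}. A $$ (i,k) * B $$ (k,j))"
  proof (rule sum.mono_neutral_right)
    show "\<forall>k\<in>{..<n} - {i..j}. A $$ (i,k) * B $$ (k,j) = 0"
    proof
      fix k assume k: "k \<in> {..<n} - {i..j}"
      show "A $$ (i,k) * B $$ (k,j) = 0"
      proof (cases "k < i")
        case True
        then show ?thesis using upper_triangularD[OF uA True] A \<open>i < n\<close> by simp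
      next
        case False
        with k have jk: "j < k" by auto
        show ?thesis using upper_triangularD[OF uB jk] B k by simp
      qed
    qed
  qed (use \<open>j < n\<close> in auto)
  finally show ?thesis .
qed

lemma upper_triangular_mult:
  fixes A B :: "'a :: semiring_0 mat"
  assumes "A \<in> carrier_mat n n" "B \<in> carrier_mat n n" "upper_triangular A" "upper_triangular B"
  shows "upper_triangular (A * B)"
proof
  fix i j assume "j < i" "i < dim_row (A * B)"
  then show "(A * B) $$ (i,j) = 0"
    using upper_triangular_mult_index[OF assms, of i j] assms(1) by simp
qed

lemma upper_triangular_mult_diag:
  fixes A B :: "'a :: semiring_0 mat"
  assumes "A \<in> carrier_mat n n" "B \<in> carrier_mat n n" "upper_triangular A" "upper_triangular B"
    and "i < n"
  shows "(A * B) $$ (i,i) = A $$ (i,i) * B $$ (i,i)"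
  using upper_triangular_mult_index[OF assms(1-5,5)] by simp

lemma left_inverse_unitri:
  assumes u: "u \<in> unitri n" and w: "w \<in> carrier_mat n n" and wu: "w * u = 1\<^sub>m n"
  shows "w \<in> unitri n"
proof -
  have uc: "u \<in> carrier_mat n n" and uu: "upper_triangular u" and ud: "\<And>i. i < n \<Longrightarrow> u $$ (i,i) = 1"
    using u unfolding unitri_def by auto
  have entry: "1\<^sub>m n $$ (i,j) = w $$ (i,j) + (\<Sum>k<j. w $$ (i,k) * u $$ (k,j))"
    if "i < n" "j < n" for i j
  proof -
    have "1\<^sub>m n $$ (i,j) = (\<Sum>k<n. w $$ (i,k) * u $$ (k,j))"
      using index_mult_mat_sum[OF w uc that] wu by simp
    also have "\<dots> = (\<Sum>k<Suc j. w $$ (i,k) * u $$ (k,j))"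
      using uc that upper_triangularD[OF uu] by (intro sum.mono_neutral_right) auto
    finally show ?thesis using ud that by simp
  qed
  have lower: "w $$ (i,j) = 0" if "j < i" "i < n" for i j
    using that
  proof (induction j rule: less_induct)
    case (less j)
    then have "(\<Sum>k<j. w $$ (i,k) * u $$ (k,j)) = 0" by simp
    with entry[of i j] less.prems show ?case by simp
  qed
  have "w $$ (i,i) = 1" if "i < n" for i
    using entry[of i i] lower that by simp
  with w lower show ?thesis unfolding unitri_def by auto
qed

lemma unitri_det:
  assumes "u \<in> unitri n"
  shows "det u = 1"
proof -
  have "diag_mat u = map (\<lambda>_. 1) [0..<n]"
    using assms unfolding unitri_def diag_mat_def by auto
  with assms show ?thesis
    unfolding unitri_def by (auto simp: det_upper_triangular[of u n] map_replicate_const)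
qed

lemma minv_unitri:
  assumes u: "u \<in> unitri n"
  shows "minv u \<in> unitri n" "u * minv u = 1\<^sub>m n"
proof -
  have uc: "u \<in> carrier_mat n n" using u unfolding unitri_def by simp
  have "u \<in> Units (ring_mat TYPE(complex) n ())"
    using det_non_zero_imp_unit[OF uc] unitri_det[OF u] by simp
  then obtain w where mw: "mat_inverse u = Some w"
    using mat_inverse(1)[OF uc, of "()"] by (cases "mat_inverse u") auto
  then have w: "minv u = w" unfolding minv_def by simp
  from mat_inverse(2)[OF uc mw] show "u * minv u = 1\<^sub>m n" "minv u \<in> unitri n"
    unfolding w using left_inverse_unitri[OF u] by auto
qed

lemma unitri_conj_upper_triangular:
  assumes u: "u \<in> unitri n" and w: "w \<in> unitri n"
    and B: "B \<in> carrier_mat n n" and uB: "upper_triangular B"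
  shows "u * B * w \<in> carrier_mat n n" "upper_triangular (u * B * w)"
    "\<And>i. i < n \<Longrightarrow> (u * B * w) $$ (i,i) = B $$ (i,i)"
proof -
  have "u \<in> carrier_mat n n" "upper_triangular u" "w \<in> carrier_mat n n" "upper_triangular w"
    using u w unfolding unitri_def by auto
  note facts = this B uB
  show "u * B * w \<in> carrier_mat n n" "upper_triangular (u * B * w)"
    using facts by (auto intro!: upper_triangular_mult[of _ n])
  show "(u * B * w) $$ (i,i) = B $$ (i,i)" if "i < n" for i
  proof -
    have "(u * B * w) $$ (i,i) = (u * B) $$ (i,i) * w $$ (i,i)"
      using facts that by (intro upper_triangular_mult_diag upper_triangular_mult) auto
    also have "\<dots> = u $$ (i,i) * B $$ (i,i) * w $$ (i,i)"
      using facts that by (simp only: upper_triangular_mult_diag)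
    finally show ?thesis using u w that unfolding unitri_def by simp
  qed
qed

lemma gen_alg_poly_curve:
  assumes "f \<in> gen_alg S" "\<And>s. s \<in> S \<Longrightarrow> \<exists>p. \<forall>t. s (B t) = poly p t"
  shows "\<exists>p. \<forall>t. f (B t) = poly p t"
  using assms(1)
proof (induction rule: gen_alg.induct)
  case (const c)
  show ?case by (rule exI[of _ "[:c:]"]) simp
next
  case (gen s)
  then show ?case using assms(2) by blast
next
  case (add f g)
  then obtain p q where "\<forall>t. f (B t) = poly p t" "\<forall>t. g (B t) = poly q t" by blast
  then show ?case by (intro exI[of _ "p + q"]) simp
next
  case (mult f g)
  then obtain p q where "\<forall>t. f (B t) = poly p t" "\<forall>t. g (B t) = poly q t" by blast
  then show ?case by (intro exI[of _ "p * q"]) simp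
qed

lemma gen_alg_cong:
  assumes "f \<in> gen_alg S" "\<And>s. s \<in> S \<Longrightarrow> s X = s Y"
  shows "f X = f Y"
  using assms(1) by (induction rule: gen_alg.induct) (auto simp: assms(2))

lemma gen_alg_comp:
  assumes "f \<in> gen_alg S" "\<And>s. s \<in> S \<Longrightarrow> (\<lambda>x. s (\<phi> x)) \<in> gen_alg T"
  shows "(\<lambda>x. f (\<phi> x)) \<in> gen_alg T"
  using assms(1)
proof (induction rule: gen_alg.induct)
  case (const c)
  show ?case by (rule gen_alg.const)
next
  case (gen s)
  then show ?case using assms(2) by blast
next
  case (add f g)
  then show ?case using gen_alg.add[of "\<lambda>x. f (\<phi> x)" T "\<lambda>x. g (\<phi> x)"] by simp
next
  case (mult f g)
  then show ?case using gen_alg.mult[of "\<lambda>x. f (\<phi> x)" T "\<lambda>x. g (\<phi> x)"] by simp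
qed

lemma coord_ring_poly_curve:
  assumes "f \<in> coord_ring r n"
    and "\<And>a i j. a \<le> r \<Longrightarrow> i \<le> j \<Longrightarrow> j < n \<Longrightarrow> \<exists>p. \<forall>t. B t a $$ (i,j) = poly p t"
  shows "\<exists>p. \<forall>t. f (B t) = poly p t"
  using assms(1) unfolding coord_ring_def by (rule gen_alg_poly_curve) (use assms(2) in blast)

lemma coord_ring_cong:
  assumes "f \<in> coord_ring r n"
    and "\<And>a i j. a \<le> r \<Longrightarrow> i \<le> j \<Longrightarrow> j < n \<Longrightarrow> X a $$ (i,j) = Y a $$ (i,j)"
  shows "f X = f Y"
  using assms(1) unfolding coord_ring_def by (rule gen_alg_cong) (use assms(2) in blast)

lemma diag_alg_cong:
  assumes "g \<in> diag_alg r n" "\<And>a i. a \<le> r \<Longrightarrow> i < n \<Longrightarrow> X a $$ (i,i) = Y a $$ (i,i)"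
  shows "g X = g Y"
  using assms(1) unfolding diag_alg_def by (rule gen_alg_cong) (use assms(2) in blast)

definition diagpart :: "nat \<Rightarrow> (nat \<Rightarrow> complex mat) \<Rightarrow> (nat \<Rightarrow> complex mat)" where
  "diagpart n A = (\<lambda>a. mat n n (\<lambda>(i,j). if i = j then A a $$ (i,i) else 0))"

lemma coord_ring_comp_diagpart:
  assumes "f \<in> coord_ring r n"
  shows "(\<lambda>A. f (diagpart n A)) \<in> diag_alg r n"
  using assms unfolding coord_ring_def diag_alg_def
proof (rule gen_alg_comp)
  fix s :: "(nat \<Rightarrow> complex mat) \<Rightarrow> complex"
  assume "s \<in> {(\<lambda>A. A a $$ (i,j)) | a i j. a \<le> r \<and> i \<le> j \<and> j < n}"
  then obtain a i j where s: "s = (\<lambda>A. A a $$ (i,j))" "a \<le> r" "i \<le> j" "j < n" by blast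
  show "(\<lambda>A. s (diagpart n A)) \<in> gen_alg {(\<lambda>A. A a $$ (i,i)) | a i. a \<le> r \<and> i < n}"
  proof (cases "i = j")
    case True
    then have "(\<lambda>A. s (diagpart n A)) = (\<lambda>A. A a $$ (i,i))" using s by (auto simp: diagpart_def)
    then show ?thesis using s True by (auto intro!: gen_alg.gen)
  next
    case False
    then have "(\<lambda>A. s (diagpart n A)) = (\<lambda>_. 0)" using s by (auto simp: diagpart_def)
    then show ?thesis by (simp add: gen_alg.const)
  qed
qed

section \<open>A cyclic linear system\<close>

text \<open>
  Forward substitution in \<open>p k * y k + q k * y (k+1) = c k\<close> starting from \<open>y 0 = y0\<close>
  gives \<open>y k = sweep_coeff p q k * y0 + sweep_const p q c k\<close>.
\<close>

fun sweep_coeff :: "(nat \<Rightarrow> 'a::field) \<Rightarrow> (nat \<Rightarrow> 'a) \<Rightarrow> nat \<Rightarrow> 'a" where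
  "sweep_coeff p q 0 = 1"
| "sweep_coeff p q (Suc k) = - p k * sweep_coeff p q k / q k"

fun sweep_const :: "(nat \<Rightarrow> 'a::field) \<Rightarrow> (nat \<Rightarrow> 'a) \<Rightarrow> (nat \<Rightarrow> 'a) \<Rightarrow> nat \<Rightarrow> 'a" where
  "sweep_const p q c 0 = 0"
| "sweep_const p q c (Suc k) = (c k - p k * sweep_const p q c k) / q k"

lemma sweep_coeff_prod:
  "\<forall>i<k. q i \<noteq> 0 \<Longrightarrow> sweep_coeff p q k * (\<Prod>i<k. q i) = (\<Prod>i<k. - p i)"
  by (induction k) (auto simp: field_simps)

lemma cyclic_system_solvable:
  fixes p q c :: "nat \<Rightarrow> 'a::field"
  assumes q: "\<forall>k<r. q k \<noteq> 0" and det: "(\<Prod>k\<le>r. q k) \<noteq> (\<Prod>k\<le>r. - p k)"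
  shows "\<exists>y. \<forall>k\<le>r. p k * y k + q k * y (Suc k mod Suc r) = c k"
proof -
  define d where "d = p r * sweep_coeff p q r + q r"
  have "d * (\<Prod>i<r. q i) = (\<Prod>k\<le>r. q k) - (\<Prod>k\<le>r. - p k)"
    unfolding d_def using sweep_coeff_prod[OF q, of p]
    by (simp add: lessThan_Suc_atMost[symmetric] algebra_simps)
  with det have "d \<noteq> 0" by auto
  define y0 where "y0 = (c r - p r * sweep_const p q c r) / d"
  define y where "y k = sweep_coeff p q k * y0 + sweep_const p q c k" for k
  have "p k * y k + q k * y (Suc k mod Suc r) = c k" if "k \<le> r" for k
  proof (cases "k < r")
    case True
    then show ?thesis using q unfolding y_def by (simp add: field_simps)
  next
    case False
    with that have "k = r" by simp
    have "p r * y r + q r * y 0 = d * y0 + p r * sweep_const p q c r"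
      unfolding y_def d_def by (simp add: algebra_simps)
    with \<open>k = r\<close> \<open>d \<noteq> 0\<close> show ?thesis unfolding y0_def by simp
  qed
  then show ?thesis by blast
qed

section \<open>Generic representations are conjugate to their diagonal part\<close>

lemma cyclic_quiver_arrow:
  assumes "cyclic_quiver r hh tt" "k \<le> r"
  shows "(hh k = k \<and> tt k = Suc k mod Suc r) \<or> (hh k \<noteq> k \<and> hh k = Suc k mod Suc r \<and> tt k = k)"
  using assms unfolding cyclic_quiver_def by (auto simp: doubleton_eq_iff)

lemma cyclic_quiver_head_tail_le:
  assumes "cyclic_quiver r hh tt" "k \<le> r"
  shows "hh k \<le> r" "tt k \<le> r"
  using cyclic_quiver_arrow[OF assms] assms(2) by (auto simp: le_Suc_eq)

definition coeff_cur :: "(nat \<Rightarrow> nat) \<Rightarrow> (nat \<Rightarrow> complex mat) \<Rightarrow> nat \<Rightarrow> nat \<Rightarrow> nat \<Rightarrow> complex" where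
  "coeff_cur hh A i j k = (if hh k = k then A k $$ (j,j) else - A k $$ (i,i))"

definition coeff_next :: "(nat \<Rightarrow> nat) \<Rightarrow> (nat \<Rightarrow> complex mat) \<Rightarrow> nat \<Rightarrow> nat \<Rightarrow> nat \<Rightarrow> complex" where
  "coeff_next hh A i j k = (if hh k = k then - A k $$ (i,i) else A k $$ (j,j))"

lemma arrow_eqn_cyclic:
  assumes "cyclic_quiver r hh tt" "k \<le> r"
  shows "y (hh k) * A k $$ (j,j) - A k $$ (i,i) * y (tt k)
     = coeff_cur hh A i j k * y k + coeff_next hh A i j k * y (Suc k mod Suc r)"
  using cyclic_quiver_arrow[OF assms] unfolding coeff_cur_def coeff_next_def
  by (auto simp: algebra_simps)

definition generic_pair :: "nat \<Rightarrow> (nat \<Rightarrow> nat) \<Rightarrow> (nat \<Rightarrow> complex mat) \<Rightarrow> nat \<Rightarrow> nat \<Rightarrow> bool" where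
  "generic_pair r hh A i j \<longleftrightarrow> (\<forall>k<r. coeff_next hh A i j k \<noteq> 0)
     \<and> (\<Prod>k\<le>r. coeff_next hh A i j k) \<noteq> (\<Prod>k\<le>r. - coeff_cur hh A i j k)"

definition generic :: "nat \<Rightarrow> nat \<Rightarrow> (nat \<Rightarrow> nat) \<Rightarrow> (nat \<Rightarrow> complex mat) \<Rightarrow> bool" where
  "generic r n hh A \<longleftrightarrow> (\<forall>i j. i < j \<longrightarrow> j < n \<longrightarrow> generic_pair r hh A i j)"

definition umat :: "nat \<Rightarrow> (nat \<Rightarrow> nat \<Rightarrow> nat \<Rightarrow> complex) \<Rightarrow> nat \<Rightarrow> complex mat" where
  "umat n X v = mat n n (\<lambda>(i,j). if i < j then X v i j else if i = j then 1 else 0)"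

lemma umat_unitri: "umat n X v \<in> unitri n"
  unfolding unitri_def umat_def by (auto intro!: upper_triangularI)

text \<open>Entry (i,j), for i < j, of \<open>umat n X (hh a) * A a = diagpart n A a * umat n X (tt a)\<close>.\<close>

definition conj_eqn :: "(nat \<Rightarrow> nat) \<Rightarrow> (nat \<Rightarrow> nat) \<Rightarrow> (nat \<Rightarrow> complex mat)
    \<Rightarrow> (nat \<Rightarrow> nat \<Rightarrow> nat \<Rightarrow> complex) \<Rightarrow> nat \<Rightarrow> nat \<Rightarrow> nat \<Rightarrow> bool" where
  "conj_eqn hh tt A X a i j \<longleftrightarrow> A a $$ (i,j) + (\<Sum>k\<in>{i<..<j}. X (hh a) i k * A a $$ (k,j))
     + X (hh a) i j * A a $$ (j,j) = A a $$ (i,i) * X (tt a) i j"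

lemma conj_eqn_cong:
  assumes "i < j" and "\<And>v k. i < k \<Longrightarrow> k \<le> j \<Longrightarrow> X v i k = X' v i k"
  shows "conj_eqn hh tt A X a i j = conj_eqn hh tt A X' a i j"
proof -
  have "(\<Sum>k\<in>{i<..<j}. X (hh a) i k * A a $$ (k,j)) = (\<Sum>k\<in>{i<..<j}. X' (hh a) i k * A a $$ (k,j))"
    using assms(2) by (intro sum.cong) auto
  with assms show ?thesis unfolding conj_eqn_def by simp
qed

lemma conj_eqn_column_solvable:
  assumes cq: "cyclic_quiver r hh tt" and "generic_pair r hh A i j"
  shows "\<exists>y. \<forall>a\<le>r. A a $$ (i,j) + (\<Sum>k\<in>{i<..<j}. X (hh a) i k * A a $$ (k,j))
                    + y (hh a) * A a $$ (j,j) = A a $$ (i,i) * y (tt a)"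
proof -
  define c where "c a = - (A a $$ (i,j) + (\<Sum>k\<in>{i<..<j}. X (hh a) i k * A a $$ (k,j)))" for a
  obtain y where y: "\<And>k. k \<le> r \<Longrightarrow>
      coeff_cur hh A i j k * y k + coeff_next hh A i j k * y (Suc k mod Suc r) = c k"
    using cyclic_system_solvable[of r "coeff_next hh A i j" "coeff_cur hh A i j" c] assms(2)
    unfolding generic_pair_def by blast
  have "y (hh a) * A a $$ (j,j) - A a $$ (i,i) * y (tt a) = c a" if "a \<le> r" for a
    using arrow_eqn_cyclic[OF cq that] y[OF that] by simp
  then show ?thesis unfolding c_def by (auto simp: algebra_simps)
qed

lemma conj_eqns_solvable:
  assumes cq: "cyclic_quiver r hh tt" and gen: "generic r n hh A"
  shows "\<exists>X. \<forall>a\<le>r. \<forall>i j. i < j \<longrightarrow> j < m \<longrightarrow> j < n \<longrightarrow> conj_eqn hh tt A X a i j"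
proof (induction m)
  case 0
  show ?case by simp
next
  case (Suc m)
  then obtain X where X: "\<forall>a\<le>r. \<forall>i j. i < j \<longrightarrow> j < m \<longrightarrow> j < n \<longrightarrow> conj_eqn hh tt A X a i j"
    by blast
  show ?case
  proof (cases "m < n")
    case False
    then show ?thesis using X by (intro exI[of _ X]) auto
  next
    case True
    have "\<forall>i. \<exists>y. i < m \<longrightarrow> (\<forall>a\<le>r. A a $$ (i,m) + (\<Sum>k\<in>{i<..<m}. X (hh a) i k * A a $$ (k,m))
                    + y (hh a) * A a $$ (m,m) = A a $$ (i,i) * y (tt a))"
    proof
      fix i
      show "\<exists>y. i < m \<longrightarrow> (\<forall>a\<le>r. A a $$ (i,m) + (\<Sum>k\<in>{i<..<m}. X (hh a) i k * A a $$ (k,m))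
                    + y (hh a) * A a $$ (m,m) = A a $$ (i,i) * y (tt a))"
      proof (cases "i < m")
        case True
        with gen \<open>m < n\<close> have "generic_pair r hh A i m" unfolding generic_def by blast
        from conj_eqn_column_solvable[OF cq this] show ?thesis by blast
      qed simp
    qed
    from choice[OF this] obtain Y where Y: "\<forall>i. i < m \<longrightarrow> (\<forall>a\<le>r.
        A a $$ (i,m) + (\<Sum>k\<in>{i<..<m}. X (hh a) i k * A a $$ (k,m))
          + Y i (hh a) * A a $$ (m,m) = A a $$ (i,i) * Y i (tt a))"
      by blast
    define X' where "X' v i j = (if j = m then Y i v else X v i j)" for v i j
    have "conj_eqn hh tt A X' a i j" if "a \<le> r" "i < j" "j < Suc m" "j < n" for a i j
    proof (cases "j = m")
      case True
      have old: "(\<Sum>k\<in>{i<..<m}. X' (hh a) i k * A a $$ (k,m)) = (\<Sum>k\<in>{i<..<m}. X (hh a) i k * A a $$ (k,m))"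
        by (intro sum.cong) (auto simp: X'_def)
      have new: "X' v i m = Y i v" for v
        by (simp add: X'_def)
      from Y that True show ?thesis
        unfolding conj_eqn_def True old new by blast
    next
      case False
      then have "conj_eqn hh tt A X' a i j = conj_eqn hh tt A X a i j"
        using that by (intro conj_eqn_cong) (simp_all add: X'_def)
      with X that False show ?thesis by simp
    qed
    then show ?thesis by (intro exI[of _ X']) blast
  qed
qed

lemma umat_conj_diagpart:
  assumes A: "A \<in> bspace r n" and a: "a \<le> r"
    and eqns: "\<forall>i j. i < j \<longrightarrow> j < n \<longrightarrow> conj_eqn hh tt A X a i j"
  shows "umat n X (hh a) * A a = diagpart n A a * umat n X (tt a)"
proof (rule eq_matI)
  let ?U = "umat n X (hh a)" and ?V = "umat n X (tt a)" and ?B = "A a" and ?D = "diagpart n A a"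
  have B: "?B \<in> carrier_mat n n" "upper_triangular ?B" using A a unfolding bspace_def by auto
  have U: "?U \<in> carrier_mat n n" "upper_triangular ?U"
    using umat_unitri[of n X "hh a"] unfolding unitri_def by auto
  have carr: "?V \<in> carrier_mat n n" "?D \<in> carrier_mat n n" unfolding umat_def diagpart_def by auto
  show "dim_row (?U * ?B) = dim_row (?D * ?V)" "dim_col (?U * ?B) = dim_col (?D * ?V)"
    using U B carr by auto
  fix i j assume "i < dim_row (?D * ?V)" "j < dim_col (?D * ?V)"
  then have i: "i < n" and j: "j < n" using carr by auto
  have "(?D * ?V) $$ (i,j) = (\<Sum>k<n. ?D $$ (i,k) * ?V $$ (k,j))"
    by (rule index_mult_mat_sum[OF carr(2,1) i j])
  also have "\<dots> = (\<Sum>k<n. if k = i then ?B $$ (i,i) * ?V $$ (i,j) else 0)"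
    using i by (intro sum.cong) (auto simp: diagpart_def)
  finally have rhs: "(?D * ?V) $$ (i,j) = ?B $$ (i,i) * ?V $$ (i,j)"
    using i by simp
  have lhs: "(?U * ?B) $$ (i,j) = (\<Sum>k\<in>{i..j}. ?U $$ (i,k) * ?B $$ (k,j))"
    by (rule upper_triangular_mult_index[OF U(1) B(1) U(2) B(2) i j])
  consider "j < i" | "i = j" | "i < j" by linarith
  then show "(?U * ?B) $$ (i,j) = (?D * ?V) $$ (i,j)"
  proof cases
    case 1
    then show ?thesis using lhs rhs i j by (simp add: umat_def)
  next
    case 2
    then show ?thesis using lhs rhs i j by (simp add: umat_def)
  next
    case 3
    then have split: "{i..j} = insert i (insert j {i<..<j})" by auto
    have mid: "(\<Sum>k\<in>{i<..<j}. ?U $$ (i,k) * ?B $$ (k,j)) = (\<Sum>k\<in>{i<..<j}. X (hh a) i k * ?B $$ (k,j))"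
      using j by (intro sum.cong) (auto simp: umat_def)
    have "(?U * ?B) $$ (i,j)
        = ?U $$ (i,i) * ?B $$ (i,j) + (?U $$ (i,j) * ?B $$ (j,j) + (\<Sum>k\<in>{i<..<j}. ?U $$ (i,k) * ?B $$ (k,j)))"
      unfolding lhs split using 3 by simp
    also have "\<dots> = ?B $$ (i,j) + (\<Sum>k\<in>{i<..<j}. X (hh a) i k * ?B $$ (k,j)) + X (hh a) i j * ?B $$ (j,j)"
      unfolding mid using 3 i j by (simp add: umat_def algebra_simps)
    also have "\<dots> = ?B $$ (i,i) * X (tt a) i j"
      using eqns 3 j unfolding conj_eqn_def by blast
    also have "\<dots> = (?D * ?V) $$ (i,j)"
      using rhs 3 i j by (simp add: umat_def)
    finally show ?thesis .
  qed
qed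

lemma generic_conj_diagpart:
  assumes cq: "cyclic_quiver r hh tt" and A: "A \<in> bspace r n" and gen: "generic r n hh A"
  shows "\<exists>u\<in>Ugroup r n. \<forall>a\<le>r. act hh tt u A a = diagpart n A a"
proof -
  obtain X where X: "\<forall>a\<le>r. \<forall>i j. i < j \<longrightarrow> j < n \<longrightarrow> j < n \<longrightarrow> conj_eqn hh tt A X a i j"
    using conj_eqns_solvable[OF cq gen, of n] by blast
  have "act hh tt (umat n X) A a = diagpart n A a" if a: "a \<le> r" for a
  proof -
    have inv: "umat n X (tt a) * minv (umat n X (tt a)) = 1\<^sub>m n"
      "minv (umat n X (tt a)) \<in> carrier_mat n n"
      using minv_unitri[OF umat_unitri] unfolding unitri_def by auto
    have carr: "umat n X (hh a) \<in> carrier_mat n n" "A a \<in> carrier_mat n n"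
      "diagpart n A a \<in> carrier_mat n n" "umat n X (tt a) \<in> carrier_mat n n"
      using A a unfolding umat_def diagpart_def bspace_def by auto
    have "umat n X (hh a) * A a = diagpart n A a * umat n X (tt a)"
      by (rule umat_conj_diagpart[OF A a]) (use X a in auto)
    then have "act hh tt (umat n X) A a = diagpart n A a * umat n X (tt a) * minv (umat n X (tt a))"
      unfolding act_def by simp
    also have "\<dots> = diagpart n A a"
      using carr inv by (simp add: assoc_mult_mat[of _ n n _ n _ n])
    finally show ?thesis .
  qed
  moreover have "umat n X \<in> Ugroup r n" unfolding Ugroup_def using umat_unitri by auto
  ultimately show ?thesis by blast
qed

section \<open>Generic perturbations along the diagonal\<close>

text \<open>
  The last arrow gets weight i+1 at position i, the others weight 1: this makes the leading
  coefficients in t of the two sides of \<open>generic_pair\<close> differ.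
\<close>

definition shift_weight :: "nat \<Rightarrow> nat \<Rightarrow> nat \<Rightarrow> complex" where
  "shift_weight r a i = (if a < r then 1 else of_nat (Suc i))"

definition diag_shift :: "nat \<Rightarrow> nat \<Rightarrow> (nat \<Rightarrow> complex mat) \<Rightarrow> complex \<Rightarrow> (nat \<Rightarrow> complex mat)" where
  "diag_shift r n A t = (\<lambda>a. if a \<le> r then mat n n (\<lambda>(i,j).
     if i = j then A a $$ (i,i) + t * shift_weight r a i else A a $$ (i,j)) else A a)"

lemma shift_weight_nonzero: "shift_weight r a i \<noteq> 0"
  unfolding shift_weight_def by (simp del: of_nat_Suc)

lemma diag_shift_index:
  "a \<le> r \<Longrightarrow> i < n \<Longrightarrow> j < n \<Longrightarrow> diag_shift r n A t a $$ (i,j)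
     = (if i = j then A a $$ (i,i) + t * shift_weight r a i else A a $$ (i,j))"
  unfolding diag_shift_def by simp

lemma diag_shift_bspace: "A \<in> bspace r n \<Longrightarrow> diag_shift r n A t \<in> bspace r n"
  unfolding bspace_def diag_shift_def
  by (auto intro!: upper_triangularI) (metis upper_triangularD carrier_matD(1))

lemma diag_shift_0:
  assumes "A \<in> bspace r n"
  shows "diag_shift r n A 0 = A"
proof
  fix a
  show "diag_shift r n A 0 a = A a"
  proof (cases "a \<le> r")
    case True
    then have "A a \<in> carrier_mat n n" using assms unfolding bspace_def by auto
    then show ?thesis using True unfolding diag_shift_def by (auto intro!: eq_matI)
  qed (simp add: diag_shift_def)
qed

lemma prod_lead_coeff_neq:
  fixes f g :: "nat \<Rightarrow> 'a::idom poly"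
  assumes "\<And>k. k < r \<Longrightarrow> lead_coeff (f k) = lead_coeff (g k)"
    and "\<And>k. k < r \<Longrightarrow> f k \<noteq> 0"
    and "lead_coeff (f r) \<noteq> lead_coeff (g r)"
  shows "(\<Prod>k\<le>r. f k) \<noteq> (\<Prod>k\<le>r. g k)"
proof
  assume "(\<Prod>k\<le>r. f k) = (\<Prod>k\<le>r. g k)"
  then have "lead_coeff (\<Prod>k\<le>r. f k) = lead_coeff (\<Prod>k\<le>r. g k)" by simp
  then have "(\<Prod>k<r. lead_coeff (f k)) * lead_coeff (f r) = (\<Prod>k<r. lead_coeff (g k)) * lead_coeff (g r)"
    by (simp add: lead_coeff_prod lead_coeff_mult flip: lessThan_Suc_atMost)
  moreover have "(\<Prod>k<r. lead_coeff (f k)) = (\<Prod>k<r. lead_coeff (g k))"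
    using assms(1) by simp
  moreover have "(\<Prod>k<r. lead_coeff (f k)) \<noteq> 0" using assms(2) by simp
  ultimately show False using assms(3) by simp
qed

lemma finite_nongeneric_pair_shift:
  assumes cq: "cyclic_quiver r hh tt" and ij: "i < j" "j < n"
  shows "finite {t. \<not> generic_pair r hh (diag_shift r n A t) i j}"
proof -
  define P where "P k = (if hh k = k then [:A k $$ (j,j), shift_weight r k j:]
                         else - [:A k $$ (i,i), shift_weight r k i:])" for k
  define Q where "Q k = (if hh k = k then - [:A k $$ (i,i), shift_weight r k i:]
                         else [:A k $$ (j,j), shift_weight r k j:])" for k
  have cur: "coeff_cur hh (diag_shift r n A t) i j k = poly (P k) t"
    and nxt: "coeff_next hh (diag_shift r n A t) i j k = poly (Q k) t" if "k \<le> r" for k t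
    using that ij unfolding coeff_cur_def coeff_next_def P_def Q_def by (auto simp: diag_shift_index)
  have Q_nonzero: "Q k \<noteq> 0" for k
    unfolding Q_def using shift_weight_nonzero by auto
  have lc: "lead_coeff (Q k) = (if hh k = k then - shift_weight r k i else shift_weight r k j)"
    "lead_coeff (P k) = (if hh k = k then shift_weight r k j else - shift_weight r k i)" for k
    unfolding P_def Q_def using shift_weight_nonzero by (simp_all add: lead_coeff_minus)
  have "lead_coeff (Q k) = lead_coeff (- P k)" if "k < r" for k
    using that by (simp add: lc lead_coeff_minus shift_weight_def)
  moreover have "lead_coeff (Q r) \<noteq> lead_coeff (- P r)"
    using ij by (simp add: lc lead_coeff_minus shift_weight_def del: of_nat_Suc)
  ultimately have "(\<Prod>k\<le>r. Q k) \<noteq> (\<Prod>k\<le>r. - P k)"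
    using Q_nonzero by (intro prod_lead_coeff_neq)
  then have D: "(\<Prod>k\<le>r. Q k) - (\<Prod>k\<le>r. - P k) \<noteq> 0" by simp
  have "t \<in> (\<Union>k<r. {t. poly (Q k) t = 0}) \<union> {t. poly ((\<Prod>k\<le>r. Q k) - (\<Prod>k\<le>r. - P k)) t = 0}"
    if "\<not> generic_pair r hh (diag_shift r n A t) i j" for t
  proof -
    have "(\<Prod>k\<le>r. coeff_next hh (diag_shift r n A t) i j k) = poly (\<Prod>k\<le>r. Q k) t"
      "(\<Prod>k\<le>r. - coeff_cur hh (diag_shift r n A t) i j k) = poly (\<Prod>k\<le>r. - P k) t"
      unfolding poly_prod by (auto simp: cur nxt intro!: prod.cong)
    with that nxt show ?thesis unfolding generic_pair_def by auto
  qed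
  then have "{t. \<not> generic_pair r hh (diag_shift r n A t) i j}
      \<subseteq> (\<Union>k<r. {t. poly (Q k) t = 0}) \<union> {t. poly ((\<Prod>k\<le>r. Q k) - (\<Prod>k\<le>r. - P k)) t = 0}"
    by blast
  moreover have "finite \<dots>"
    using D Q_nonzero by (intro finite_UnI finite_UN_I finite_lessThan poly_roots_finite)
  ultimately show ?thesis by (rule finite_subset)
qed

lemma finite_nongeneric_shift:
  assumes "cyclic_quiver r hh tt"
  shows "finite {t. \<not> generic r n hh (diag_shift r n A t)}"
proof -
  have "{t. \<not> generic r n hh (diag_shift r n A t)}
      \<subseteq> (\<Union>j<n. \<Union>i<j. {t. \<not> generic_pair r hh (diag_shift r n A t) i j})"
    unfolding generic_def by blast
  moreover have "finite (\<Union>j<n. \<Union>i<j. {t. \<not> generic_pair r hh (diag_shift r n A t) i j})"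
    using finite_nongeneric_pair_shift[OF assms] by simp
  ultimately show ?thesis by (rule finite_subset)
qed

lemma poly_eq_0_of_cofinite_roots:
  fixes p :: "'a::{idom, ring_char_0} poly"
  assumes "finite S" "\<And>t. t \<notin> S \<Longrightarrow> poly p t = 0"
  shows "p = 0"
proof (rule ccontr)
  assume "p \<noteq> 0"
  then have "finite {t. poly p t = 0}" by (rule poly_roots_finite)
  with assms(1) have "finite (S \<union> {t. poly p t = 0})" by (rule finite_UnI)
  also have "S \<union> {t. poly p t = 0} = UNIV" using assms(2) by auto
  finally show False using infinite_UNIV_char_0 by blast
qed

lemma invariant_eq_diagpart:
  assumes cq: "cyclic_quiver r hh tt" and f: "f \<in> invariant_ring r n hh tt" and A: "A \<in> bspace r n"
  shows "f A = f (diagpart n A)"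
proof -
  let ?A = "diag_shift r n A"
  have fc: "f \<in> coord_ring r n" using f unfolding invariant_ring_def by simp
  have entry: "\<exists>p. \<forall>t. ?A t a $$ (i,j) = poly p t" if "a \<le> r" "i < n" "j < n" for a i j
    using that by (intro exI[of _ "[:A a $$ (i,j), if i = j then shift_weight r a i else 0:]"])
      (simp add: diag_shift_index algebra_simps)
  obtain p where p: "\<forall>t. f (?A t) = poly p t"
    using coord_ring_poly_curve[OF fc, of ?A] entry by force
  obtain q where q: "\<forall>t. f (diagpart n (?A t)) = poly q t"
  proof -
    have "\<exists>p. \<forall>t. diagpart n (?A t) a $$ (i,j) = poly p t" if "a \<le> r" "i \<le> j" "j < n" for a i j
      using entry[of a i i] that by (cases "i = j") (auto simp: diagpart_def intro: exI[of _ 0])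
    then show ?thesis using coord_ring_poly_curve[OF fc, of "\<lambda>t. diagpart n (?A t)"] that by blast
  qed
  have "poly (p - q) t = 0" if gen: "generic r n hh (?A t)" for t
  proof -
    have At: "?A t \<in> bspace r n" by (rule diag_shift_bspace[OF A])
    obtain u where u: "u \<in> Ugroup r n" and conj: "\<forall>a\<le>r. act hh tt u (?A t) a = diagpart n (?A t) a"
      using generic_conj_diagpart[OF cq At gen] by blast
    have "f (?A t) = f (act hh tt u (?A t))" using f u At unfolding invariant_ring_def by simp
    also have "\<dots> = f (diagpart n (?A t))" using conj by (intro coord_ring_cong[OF fc]) auto
    finally show ?thesis using p q by simp
  qed
  then have "p - q = 0"
    by (intro poly_eq_0_of_cofinite_roots[OF finite_nongeneric_shift[OF cq, of n A]]) auto
  then have "p = q" by simp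
  have "f A = f (?A 0)" using diag_shift_0[OF A] by simp
  also have "\<dots> = f (diagpart n (?A 0))" using p q \<open>p = q\<close> by simp
  also have "\<dots> = f (diagpart n A)" using diag_shift_0[OF A] by simp
  finally show ?thesis .
qed

lemma act_bspace_diag:
  assumes cq: "cyclic_quiver r hh tt" and u: "u \<in> Ugroup r n" and A: "A \<in> bspace r n"
  shows "act hh tt u A \<in> bspace r n"
    and "\<And>a i. a \<le> r \<Longrightarrow> i < n \<Longrightarrow> act hh tt u A a $$ (i,i) = A a $$ (i,i)"
proof -
  have "u (hh a) \<in> unitri n" "minv (u (tt a)) \<in> unitri n"
    "A a \<in> carrier_mat n n" "upper_triangular (A a)" if "a \<le> r" for a
    using u A minv_unitri cyclic_quiver_head_tail_le[OF cq that] that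
    unfolding Ugroup_def bspace_def by auto
  note conj = unitri_conj_upper_triangular[OF this]
  show "act hh tt u A \<in> bspace r n" using conj unfolding bspace_def act_def by auto
  show "act hh tt u A a $$ (i,i) = A a $$ (i,i)" if "a \<le> r" "i < n" for a i
    using conj that unfolding act_def by auto
qed

theorem mainTheorem4:
  fixes r n :: nat and hh tt :: "nat \<Rightarrow> nat"
  assumes "cyclic_quiver r hh tt"
  shows "\<forall>f \<in> coord_ring r n.
           f \<in> invariant_ring r n hh tt \<longleftrightarrow>
           (\<exists>g \<in> diag_alg r n. \<forall>A \<in> bspace r n. f A = g A)"
proof (intro ballI iffI)
  fix f assume fc: "f \<in> coord_ring r n" and fi: "f \<in> invariant_ring r n hh tt"
  show "\<exists>g \<in> diag_alg r n. \<forall>A \<in> bspace r n. f A = g A"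
    using invariant_eq_diagpart[OF assms fi]
    by (intro bexI[OF _ coord_ring_comp_diagpart[OF fc]]) simp
next
  fix f assume fc: "f \<in> coord_ring r n" and "\<exists>g \<in> diag_alg r n. \<forall>A \<in> bspace r n. f A = g A"
  then obtain g where g: "g \<in> diag_alg r n" and fg: "\<forall>A \<in> bspace r n. f A = g A" by blast
  have "f (act hh tt u A) = f A" if u: "u \<in> Ugroup r n" and A: "A \<in> bspace r n" for u A
  proof -
    have "f (act hh tt u A) = g (act hh tt u A)" using fg act_bspace_diag(1)[OF assms u A] by simp
    also have "\<dots> = g A" using act_bspace_diag(2)[OF assms u A] by (intro diag_alg_cong[OF g])
    also have "\<dots> = f A" using fg A by simp
    finally show ?thesis .
  qed
  with fc show "f \<in> invariant_ring r n hh tt" unfolding invariant_ring_def by simp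
qed

end
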